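(* For every real number $r\ge 1$, the function $f_r:[0,1]\to\mathbb{R}$, \[ f_r(x)=\sum_{m\in\mathbb{Z}}\left|\frac{\sin(\pi(x+m))}{\pi(x+m)}\right|^{2r}, \] attains a global minimum on $[0,1]$ at $x=\tfrac12$; that is, $f_r(x)\ge f_r(\tfrac12)$ for all $x\in[0,1]$.
   Context: The summand $\frac{\sin(\pi y)}{\pi y}$ is interpreted as $1$ when $y=0$. The series converges absolutely for every $x\in\mathbb{R}$ and every $r\ge1$. *)

theory Defs
  imports "HOL-Analysis.Analysis"
begin

definition nsinc :: "real \<Rightarrow> real" where
  "nsinc y = (if y = 0 then 1 else sin (pi * y) / (pi * y))"

definition f_r :: "real \<Rightarrow> real \<Rightarrow> real" where
  "f_r r x = (\<Sum>\<^sub>\<infinity>m::int. \<bar>nsinc (x + real_of_int m)\<bar> powr (2 * r))"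

end

theory Submission
  imports Defs
begin

(* Write a(y) = sinc(y)^2 and group the terms of f_r(x) into pairs u_n = a(x + n),
   v_n = a(x - n - 1) for n >= 0; at x = 1/2 both equal b_n = a(n + 1/2).  The partial
   fraction expansion of pi^2 / sin^2, which follows from the reflection formula of the
   trigamma function, gives sum (u_n + v_n) = 1 = sum 2 b_n, and for n >= 1 Jordan's
   inequality yields u_n + v_n <= 2 b_n.  Convexity of t^r gives, termwise,
   u^r + v^r >= 2 b^r + r b^(r-1) (u + v - 2 b).  The differences u_n + v_n - 2 b_n sum
   to 0 and are nonpositive for n >= 1, hence nonnegative at n = 0; as the weights
   b_n^(r-1) decrease, the weighted correction has a nonnegative sum. *)

lemma Gamma_reflection_real: "Gamma x * Gamma (1 - x) = pi / sin (pi * x)"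
proof -
  have "complex_of_real (Gamma x * Gamma (1 - x)) = complex_of_real (pi / sin (pi * x))"
    using Gamma_reflection_complex[of "complex_of_real x"]
    by (simp flip: Gamma_complex_of_real sin_of_real)
  then show ?thesis
    by (simp only: of_real_eq_iff)
qed

lemma Digamma_reflection_real:
  fixes x :: real
  assumes "0 < x" "x < 1"
  shows "Digamma (1 - x) - Digamma x = pi * cos (pi * x) / sin (pi * x)"
proof -
  define f where "f y = ln_Gamma y + ln_Gamma (1 - y) + ln (sin (pi * y))" for y :: real
  have f_const: "f y = ln pi" if "0 < y" "y < 1" for y
  proof -
    have "sin (pi * y) > 0"
      using that by (intro sin_gt_zero) auto
    moreover have "Gamma y > 0" "Gamma (1 - y) > 0"
      using that by auto
    ultimately have "f y = ln (Gamma y * Gamma (1 - y) * sin (pi * y))"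
      using that by (simp add: f_def ln_Gamma_real_pos ln_mult del: Gamma_real_pos)
    also have "\<dots> = ln pi"
      using \<open>sin (pi * y) > 0\<close> by (simp add: Gamma_reflection_real)
    finally show ?thesis .
  qed
  have "sin (pi * x) > 0"
    using assms by (intro sin_gt_zero) auto
  then have "(f has_real_derivative
      Digamma x - Digamma (1 - x) + pi * cos (pi * x) / sin (pi * x)) (at x)"
    unfolding f_def using assms by (auto intro!: derivative_eq_intros simp: field_simps)
  then have "Digamma x - Digamma (1 - x) + pi * cos (pi * x) / sin (pi * x) = 0"
    by (rule DERIV_local_const[where d = "min x (1 - x)"]) (use assms f_const in auto)
  then show ?thesis
    by simp
qed

lemma trigamma_reflection_real:
  fixes x :: real
  assumes "0 < x" "x < 1"
  shows "Polygamma 1 x + Polygamma 1 (1 - x) = (pi / sin (pi * x))\<^sup>2"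
proof -
  define g where "g y = Digamma (1 - y) - Digamma y - pi * cos (pi * y) / sin (pi * y)" for y :: real
  have "sin (pi * x) > 0"
    using assms by (intro sin_gt_zero) auto
  moreover have "x \<notin> \<int>\<^sub>\<le>\<^sub>0" "1 - x \<notin> \<int>\<^sub>\<le>\<^sub>0"
    using assms by (auto elim!: nonpos_Ints_cases)
  ultimately have "(g has_real_derivative
      (pi / sin (pi * x))\<^sup>2 - Polygamma 1 (1 - x) - Polygamma 1 x) (at x)"
    unfolding g_def
    by (auto intro!: derivative_eq_intros simp: field_simps power2_eq_square)
      (simp flip: distrib_left)
  then have "(pi / sin (pi * x))\<^sup>2 - Polygamma 1 (1 - x) - Polygamma 1 x = 0"
    by (rule DERIV_local_const[where d = "min x (1 - x)"])
      (use assms in \<open>auto simp: g_def Digamma_reflection_real\<close>)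
  then show ?thesis
    by simp
qed

lemma inverse_power2_pairs_sums:
  fixes x :: real
  assumes "0 < x" "x < 1"
  shows "(\<lambda>n. 1 / (x + real n)\<^sup>2 + 1 / (1 - x + real n)\<^sup>2) sums (pi / sin (pi * x))\<^sup>2"
proof -
  have "(\<lambda>n. 1 / (y + real n)\<^sup>2) sums Polygamma 1 y" if "0 < y" for y :: real
    using Polygamma_LIMSEQ[of y 1] that by (simp add: divide_inverse power2_eq_square)
  then have "(\<lambda>n. 1 / (x + real n)\<^sup>2 + 1 / (1 - x + real n)\<^sup>2)
      sums (Polygamma 1 x + Polygamma 1 (1 - x))"
    using assms by (intro sums_add) auto
  then show ?thesis
    unfolding trigamma_reflection_real[OF assms] .
qed

lemma sin_pi_add_int_power2: "(sin (pi * (x + of_int m)))\<^sup>2 = (sin (pi * x))\<^sup>2"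
proof -
  have "(cos (pi * of_int m))\<^sup>2 = 1"
    using sin_cos_squared_add[of "pi * of_int m"] by simp
  moreover have "sin (pi * (x + of_int m)) = sin (pi * x) * cos (pi * of_int m)"
    by (simp add: distrib_left sin_add)
  ultimately show ?thesis
    by (simp add: power_mult_distrib)
qed

lemma nsinc_minus: "nsinc (- y) = nsinc y"
  by (simp add: nsinc_def)

lemma nsinc_half_mirror: "nsinc (1/2 - real n - 1) = nsinc (1/2 + real n)"
  using nsinc_minus[of "1/2 + real n"] by (simp add: algebra_simps)

lemma nsinc_of_int: "nsinc (of_int k) = (if k = 0 then 1 else 0)"
  by (simp add: nsinc_def mult.commute)

lemma abs_nsinc_le_1: "\<bar>nsinc y\<bar> \<le> 1"
  using abs_sin_x_le_abs_x[of "pi * y"] by (simp add: nsinc_def divide_le_eq_1)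

lemma nsinc_power2_shift:
  assumes "y - x \<in> \<int>" "y \<noteq> 0"
  shows "(nsinc y)\<^sup>2 = (sin (pi * x) / pi)\<^sup>2 / y\<^sup>2"
proof -
  from assms(1) obtain m where "y = x + of_int m"
    by (metis Ints_cases add_diff_cancel_left' diff_add_cancel)
  then show ?thesis
    using assms(2) by (simp add: nsinc_def power_divide power_mult_distrib sin_pi_add_int_power2)
qed

lemma nsinc_power2_pairs_sums:
  fixes x :: real
  assumes "0 \<le> x" "x \<le> 1"
  shows "(\<lambda>n. (nsinc (x + real n))\<^sup>2 + (nsinc (x - real n - 1))\<^sup>2) sums 1"
proof (cases "x = 0 \<or> x = 1")
  case True
  then obtain k :: int where k: "x = of_int k" "k = 0 \<or> k = 1"
    by (metis of_int_0 of_int_1)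
  have "(\<lambda>n. (nsinc (x + real n))\<^sup>2 + (nsinc (x - real n - 1))\<^sup>2) = (\<lambda>n. if n = 0 then 1 else 0)"
  proof
    fix n :: nat
    have int_args: "x + real n = of_int (k + int n)" "x - real n - 1 = of_int (k - int n - 1)"
      using k(1) by simp_all
    show "(nsinc (x + real n))\<^sup>2 + (nsinc (x - real n - 1))\<^sup>2 = (if n = 0 then 1 else 0)"
      unfolding int_args nsinc_of_int using k(2) by auto
  qed
  then show ?thesis
    using sums_single[of 0 "\<lambda>_. 1 :: real"] by simp
next
  case False
  then have x: "0 < x" "x < 1"
    using assms by auto
  have "sin (pi * x) \<noteq> 0"
    using x sin_gt_zero[of "pi * x"] by auto
  then have "(sin (pi * x) / pi)\<^sup>2 * (pi / sin (pi * x))\<^sup>2 = 1"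
    by (simp add: power_divide)
  moreover have "(sin (pi * x) / pi)\<^sup>2 * (1 / (x + real n)\<^sup>2 + 1 / (1 - x + real n)\<^sup>2)
      = (nsinc (x + real n))\<^sup>2 + (nsinc (x - real n - 1))\<^sup>2" for n
  proof -
    have "(x - real n - 1)\<^sup>2 = (1 - x + real n)\<^sup>2"
      by (simp add: power2_eq_square algebra_simps)
    then have "(nsinc (x - real n - 1))\<^sup>2 = (sin (pi * x) / pi)\<^sup>2 / (1 - x + real n)\<^sup>2"
      using x nsinc_power2_shift[of "x - real n - 1" x] by simp
    moreover have "(nsinc (x + real n))\<^sup>2 = (sin (pi * x) / pi)\<^sup>2 / (x + real n)\<^sup>2"
      using x by (intro nsinc_power2_shift) auto
    ultimately show ?thesis
      by (simp add: algebra_simps)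
  qed
  ultimately show ?thesis
    using sums_mult[OF inverse_power2_pairs_sums[OF x], of "(sin (pi * x) / pi)\<^sup>2"] by simp
qed

lemma has_sum_int_split:
  fixes g :: "int \<Rightarrow> real"
  assumes "\<And>m. 0 \<le> g m" "(\<lambda>n. g (int n)) sums a" "(\<lambda>n. g (- int n - 1)) sums b"
  shows "(g has_sum (a + b)) UNIV"
proof -
  have "(g has_sum a) (range int)"
    using sums_nonneg_imp_has_sum[OF assms(2)] assms(1)
    by (subst has_sum_reindex) (auto simp: o_def)
  moreover have "(g has_sum b) (range (\<lambda>n. - int n - 1))"
    using sums_nonneg_imp_has_sum[OF assms(3)] assms(1)
    by (subst has_sum_reindex) (auto simp: o_def inj_on_def)
  moreover have "range int \<union> range (\<lambda>n. - int n - 1) = UNIV"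
  proof -
    have "m \<in> range int \<or> m \<in> range (\<lambda>n. - int n - 1)" for m :: int
      by (cases "m \<ge> 0") (auto simp: image_iff intro: exI[of _ "nat m"] exI[of _ "nat (- m - 1)"])
    then show ?thesis
      by blast
  qed
  moreover have "range int \<inter> range (\<lambda>n. - int n - 1) = {}"
    by auto
  ultimately show ?thesis
    using has_sum_Un_disjoint by metis
qed

lemma nsinc_power2_powr_le:
  assumes "1 \<le> r"
  shows "(nsinc y)\<^sup>2 powr r \<le> (nsinc y)\<^sup>2"
proof -
  have "(nsinc y)\<^sup>2 \<le> 1"
    using abs_nsinc_le_1 by (simp add: abs_square_le_1)
  then have "(nsinc y)\<^sup>2 powr r \<le> (nsinc y)\<^sup>2 powr 1"
    using assms by (intro powr_mono') auto
  then show ?thesis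
    by simp
qed

lemma f_r_sums:
  fixes r x :: real
  assumes "1 \<le> r" "0 \<le> x" "x \<le> 1"
  shows "(\<lambda>n. (nsinc (x + real n))\<^sup>2 powr r + (nsinc (x - real n - 1))\<^sup>2 powr r) sums f_r r x"
proof -
  define g where "g m = (nsinc (x + of_int m))\<^sup>2 powr r" for m :: int
  have pairs: "summable (\<lambda>n. (nsinc (x + real n))\<^sup>2 + (nsinc (x - real n - 1))\<^sup>2)"
    using nsinc_power2_pairs_sums[OF assms(2,3)] by (rule sums_summable)
  have shift: "x + of_int (- int n - 1) = x - real n - 1" for n :: nat
    by simp
  have summable_pos: "summable (\<lambda>n. g (int n))"
  proof (rule summable_comparison_test'[OF pairs])
    fix n :: nat
    show "norm (g (int n)) \<le> (nsinc (x + real n))\<^sup>2 + (nsinc (x - real n - 1))\<^sup>2"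
      using nsinc_power2_powr_le[OF assms(1), of "x + real n"] by (simp add: g_def add_increasing2)
  qed
  have summable_neg: "summable (\<lambda>n. g (- int n - 1))"
  proof (rule summable_comparison_test'[OF pairs])
    fix n :: nat
    show "norm (g (- int n - 1)) \<le> (nsinc (x + real n))\<^sup>2 + (nsinc (x - real n - 1))\<^sup>2"
      unfolding g_def shift using nsinc_power2_powr_le[OF assms(1), of "x - real n - 1"]
      by (simp add: add_increasing)
  qed
  have "(g has_sum ((\<Sum>n. g (int n)) + (\<Sum>n. g (- int n - 1)))) UNIV"
    using summable_pos summable_neg by (intro has_sum_int_split) (auto simp: g_def)
  moreover have "g = (\<lambda>m. \<bar>nsinc (x + of_int m)\<bar> powr (2 * r))"
    by (simp add: g_def fun_eq_iff flip: powr_powr)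
  ultimately have "f_r r x = (\<Sum>n. g (int n)) + (\<Sum>n. g (- int n - 1))"
    unfolding f_r_def by (simp add: infsumI)
  moreover have "(\<lambda>n. g (int n) + g (- int n - 1)) sums ((\<Sum>n. g (int n)) + (\<Sum>n. g (- int n - 1)))"
    using summable_pos summable_neg by (intro sums_add summable_sums)
  ultimately show ?thesis
    unfolding g_def shift of_int_of_nat_eq by simp
qed

lemma Jordan_inequality_sin_pi:
  fixes u :: real
  assumes "0 \<le> u" "u \<le> 1/2"
  shows "2 * u \<le> sin (pi * u)"
proof -
  have "concave_on {0..pi} sin"
    by (rule f''_le0_imp_concave[where f' = cos and f'' = "\<lambda>x. - sin x"])
      (auto intro!: derivative_eq_intros sin_ge_zero)
  from concave_onD[OF this, of "2 * u" 0 "pi / 2"] show ?thesis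
    using assms by (simp add: mult.commute)
qed

lemma sin_pi_power2_le:
  fixes x :: real
  assumes "0 \<le> x" "x \<le> 1"
  shows "(sin (pi * x))\<^sup>2 \<le> 1 - 4 * (x - 1/2)\<^sup>2"
proof -
  define t where "t = x - 1/2"
  have "sin (pi * x) = cos (pi * t)"
    by (simp add: t_def right_diff_distrib cos_diff)
  then have "(sin (pi * x))\<^sup>2 = 1 - (sin (pi * \<bar>t\<bar>))\<^sup>2"
    by (cases "t \<ge> 0") (simp_all add: cos_squared_eq)
  moreover have "(2 * \<bar>t\<bar>)\<^sup>2 \<le> (sin (pi * \<bar>t\<bar>))\<^sup>2"
    using assms by (intro power_mono Jordan_inequality_sin_pi) (auto simp: t_def abs_if)
  ultimately show ?thesis
    by (simp add: t_def power_mult_distrib)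
qed

lemma inverse_squares_pair_le:
  fixes c s t :: real
  assumes "1 \<le> c" "0 \<le> s" "s \<le> 1 - 4 * t\<^sup>2"
  shows "s / (c + t)\<^sup>2 + s / (c - t)\<^sup>2 \<le> 2 / c\<^sup>2"
proof -
  have "\<bar>t\<bar> \<le> 1/2"
    using assms abs_le_square_iff[of t "1/2"] by (simp add: power_divide)
  then have pos: "c + t > 0" "c - t > 0"
    using assms by auto
  have "s * ((c - t)\<^sup>2 + (c + t)\<^sup>2) * c\<^sup>2 \<le> (1 - 4 * t\<^sup>2) * ((c - t)\<^sup>2 + (c + t)\<^sup>2) * c\<^sup>2"
    using assms by (intro mult_right_mono) auto
  also have "\<dots> = 2 * ((c\<^sup>2 - t\<^sup>2)\<^sup>2 - t\<^sup>2 * ((4 * c\<^sup>2 - 3) * c\<^sup>2 + 4 * t\<^sup>2 * c\<^sup>2 + t\<^sup>2))"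
    by (simp add: power2_eq_square algebra_simps)
  also have "\<dots> \<le> 2 * (c\<^sup>2 - t\<^sup>2)\<^sup>2"
  proof -
    have "1 \<le> c\<^sup>2"
      using assms(1) by (rule one_le_power)
    then have "0 \<le> 4 * c\<^sup>2 - 3"
      by simp
    then show ?thesis
      by simp
  qed
  also have "\<dots> = 2 * ((c + t)\<^sup>2 * (c - t)\<^sup>2)"
    by (simp add: power2_eq_square algebra_simps)
  finally show ?thesis
    using pos by (simp add: field_simps)
qed

lemma nsinc_power2_half: "(nsinc (1/2 + real n))\<^sup>2 = 1 / (pi * (1/2 + real n))\<^sup>2"
proof -
  have "1/2 + real n \<noteq> 0"
    by (simp add: add_pos_nonneg)
  then show ?thesis
    using nsinc_power2_shift[of "1/2 + real n" "1/2"] by (simp add: power_divide power_mult_distrib)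
qed

lemma nsinc_power2_pair_le:
  fixes x :: real
  assumes "0 \<le> x" "x \<le> 1" "1 \<le> n"
  shows "(nsinc (x + real n))\<^sup>2 + (nsinc (x - real n - 1))\<^sup>2 \<le> 2 * (nsinc (1/2 + real n))\<^sup>2"
proof -
  define c where "c = 1/2 + real n"
  define t where "t = x - 1/2"
  define s where "s = (sin (pi * x))\<^sup>2"
  have "(nsinc (x + real n))\<^sup>2 = (sin (pi * x) / pi)\<^sup>2 / (x + real n)\<^sup>2"
    "(nsinc (x - real n - 1))\<^sup>2 = (sin (pi * x) / pi)\<^sup>2 / (x - real n - 1)\<^sup>2"
    using assms by (auto intro!: nsinc_power2_shift)
  moreover have "x + real n = c + t" "(x - real n - 1)\<^sup>2 = (c - t)\<^sup>2"
    by (simp_all add: c_def t_def power2_eq_square algebra_simps)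
  ultimately have "(nsinc (x + real n))\<^sup>2 = (sin (pi * x) / pi)\<^sup>2 / (c + t)\<^sup>2"
    "(nsinc (x - real n - 1))\<^sup>2 = (sin (pi * x) / pi)\<^sup>2 / (c - t)\<^sup>2"
    by simp_all
  then have "(nsinc (x + real n))\<^sup>2 + (nsinc (x - real n - 1))\<^sup>2
      = (s / (c + t)\<^sup>2 + s / (c - t)\<^sup>2) / pi\<^sup>2"
    by (simp add: s_def power_divide add_divide_distrib mult.commute)
  also have "\<dots> \<le> (2 / c\<^sup>2) / pi\<^sup>2"
    using assms sin_pi_power2_le[of x]
    by (intro divide_right_mono inverse_squares_pair_le) (auto simp: c_def t_def s_def)
  also have "\<dots> = 2 * (nsinc (1/2 + real n))\<^sup>2"
    by (simp add: nsinc_power2_half c_def power_mult_distrib)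
  finally show ?thesis .
qed

lemma powr_ge_tangent:
  fixes u b r :: real
  assumes "0 \<le> u" "0 < b" "1 \<le> r"
  shows "b powr r + r * b powr (r - 1) * (u - b) \<le> u powr r"
proof (cases "u = 0")
  case True
  have "b powr (r - 1) * b = b powr r"
    using assms by (simp add: powr_diff)
  then have "b powr r + r * b powr (r - 1) * (u - b) = (1 - r) * b powr r"
    using True by (simp add: algebra_simps)
  also have "\<dots> \<le> 0"
    using assms by (simp add: mult_nonpos_nonneg)
  finally show ?thesis
    using True by simp
next
  case False
  have "r * b powr (r - 1) * (u - b) \<le> u powr r - b powr r"
    using assms False
    by (intro convex_on_imp_above_tangent[OF powr_convex])
      (auto intro!: derivative_eq_intros simp: interior_open)
  then show ?thesis
    by simp
qed

lemma suminf_decseq_weighted_nonneg: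
  fixes w d :: "nat \<Rightarrow> real"
  assumes d: "d sums 0" "\<And>n. 1 \<le> n \<Longrightarrow> d n \<le> 0"
    and w: "decseq w" "\<And>n. 0 \<le> w n"
  shows "summable (\<lambda>n. w n * d n)" and "0 \<le> (\<Sum>n. w n * d n)"
proof -
  have "(\<lambda>n. d (Suc n)) sums (- d 0)"
    using d(1) by (subst sums_Suc_iff) simp
  then have "0 \<le> d 0"
    using d(2) sums_le[of "\<lambda>n. d (Suc n)" "\<lambda>_. 0" "- d 0" 0] by simp
  show summable: "summable (\<lambda>n. w n * d n)"
  proof (rule summable_comparison_test'[where N = 1])
    show "summable (\<lambda>n. w 0 * - d n)"
      using d(1) by (intro summable_mult summable_minus sums_summable)
    show "norm (w n * d n) \<le> w 0 * - d n" if "1 \<le> n" for n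
      using d(2)[OF that] w decseqD[OF w(1), of 0 n]
      by (simp add: abs_mult mult_right_mono_neg)
  qed
  (* Subtracting w 1 * d n, which sums to 0, makes every term nonnegative. *)
  have shifted_sums: "(\<lambda>n. (w n - w 1) * d n) sums ((\<Sum>n. w n * d n) - w 1 * 0)"
    unfolding left_diff_distrib using summable d(1) by (intro sums_diff sums_mult summable_sums)
  have shifted_nonneg: "0 \<le> (w n - w 1) * d n" for n
  proof (cases "n = 0")
    case True
    then show ?thesis
      using \<open>0 \<le> d 0\<close> decseqD[OF w(1), of 0 1] by simp
  next
    case False
    then show ?thesis
      using d(2)[of n] decseqD[OF w(1), of 1 n] by (simp add: mult_nonpos_nonpos)
  qed
  show "0 \<le> (\<Sum>n. w n * d n)"
    using sums_le[OF shifted_nonneg sums_zero shifted_sums] by simp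
qed

lemma suminf_powr_pairs_ge:
  fixes u v b :: "nat \<Rightarrow> real" and r s :: real
  assumes r: "1 \<le> r"
    and uv: "\<And>n. 0 \<le> u n" "\<And>n. 0 \<le> v n" "summable (\<lambda>n. u n powr r + v n powr r)"
    and b: "\<And>n. 0 < b n" "decseq b"
    and sums: "(\<lambda>n. u n + v n) sums s" "(\<lambda>n. 2 * b n) sums s"
    and tail_le: "\<And>n. 1 \<le> n \<Longrightarrow> u n + v n \<le> 2 * b n"
  shows "(\<Sum>n. 2 * b n powr r) \<le> (\<Sum>n. u n powr r + v n powr r)"
proof -
  define w where "w n = b n powr (r - 1)" for n
  define d where "d n = u n + v n - 2 * b n" for n
  have "d sums 0"
    unfolding d_def using sums_diff[OF sums] by simp
  moreover have "decseq w"
    unfolding decseq_def w_def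
  proof (intro allI impI)
    fix m n :: nat
    assume "m \<le> n"
    then show "b n powr (r - 1) \<le> b m powr (r - 1)"
      using r b(1)[of n] decseqD[OF b(2)] by (intro powr_mono2) auto
  qed
  ultimately have wd: "summable (\<lambda>n. w n * d n)" "0 \<le> (\<Sum>n. w n * d n)"
    using suminf_decseq_weighted_nonneg[of d w] tail_le by (auto simp: d_def w_def)
  have tangent: "2 * b n powr r + r * (w n * d n) \<le> u n powr r + v n powr r" for n
  proof -
    have "2 * b n powr r + r * (w n * d n) =
        (b n powr r + r * b n powr (r - 1) * (u n - b n)) +
        (b n powr r + r * b n powr (r - 1) * (v n - b n))"
      by (simp add: w_def d_def algebra_simps)
    then show ?thesis
      using powr_ge_tangent[OF uv(1) b(1) r, of n n] powr_ge_tangent[OF uv(2) b(1) r, of n n]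
      by linarith
  qed
  have summable_b: "summable (\<lambda>n. 2 * b n powr r)"
  proof (rule summable_comparison_test)
    show "summable (\<lambda>n. u n powr r + v n powr r - r * (w n * d n))"
      using uv(3) wd(1) by (intro summable_diff summable_mult)
    show "\<exists>N. \<forall>n\<ge>N. norm (2 * b n powr r) \<le> u n powr r + v n powr r - r * (w n * d n)"
      using tangent by (auto simp: algebra_simps)
  qed
  have "(\<lambda>n. 2 * b n powr r + r * (w n * d n)) sums ((\<Sum>n. 2 * b n powr r) + r * (\<Sum>n. w n * d n))"
    by (rule sums_add[OF summable_sums[OF summable_b] sums_mult[OF summable_sums[OF wd(1)]]])
  then have "(\<Sum>n. 2 * b n powr r) + r * (\<Sum>n. w n * d n) \<le> (\<Sum>n. u n powr r + v n powr r)"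
    by (rule sums_le[OF tangent _ summable_sums[OF uv(3)]])
  moreover have "0 \<le> r * (\<Sum>n. w n * d n)"
    using r wd(2) by simp
  ultimately show ?thesis
    by linarith
qed

theorem proposition1:
  fixes r x :: real
  assumes "r \<ge> 1" and "x \<in> {0..1}"
  shows "f_r r x \<ge> f_r r (1/2)"
proof -
  have x: "0 \<le> x" "x \<le> 1"
    using assms(2) by auto
  define b where "b n = (nsinc (1/2 + real n))\<^sup>2" for n
  have half_sums: "(\<lambda>n. 2 * b n) sums 1"
    using nsinc_power2_pairs_sums[of "1/2", unfolded nsinc_half_mirror b_def[symmetric]]
    by (simp only: mult_2)
  have half_powr_sums: "(\<lambda>n. 2 * b n powr r) sums f_r r (1/2)"
    using f_r_sums[OF assms(1), of "1/2", unfolded nsinc_half_mirror b_def[symmetric]]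
    by (simp only: mult_2)
  note x_powr_sums = f_r_sums[OF assms(1) x]
  have "(\<Sum>n. 2 * b n powr r)
      \<le> (\<Sum>n. (nsinc (x + real n))\<^sup>2 powr r + (nsinc (x - real n - 1))\<^sup>2 powr r)"
  proof (rule suminf_powr_pairs_ge[OF assms(1) _ _ sums_summable[OF x_powr_sums] _ _
        nsinc_power2_pairs_sums[OF x] half_sums])
    show "(nsinc (x + real n))\<^sup>2 + (nsinc (x - real n - 1))\<^sup>2 \<le> 2 * b n" if "1 \<le> n" for n
      using x that by (simp add: b_def nsinc_power2_pair_le)
    show "0 < b n" for n
      by (simp add: b_def nsinc_power2_half add_pos_nonneg)
    show "decseq b"
      by (auto simp: decseq_def b_def nsinc_power2_half
          intro!: divide_left_mono power_mono mult_pos_pos add_pos_nonneg)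
  qed auto
  then show ?thesis
    using half_powr_sums x_powr_sums by (simp add: sums_iff)
qed

end
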